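(* For every $\Sigma_1$-formula $A$, if $\mathsf{PA}_0\vdash A$ then $\mathsf{HA}_0\vdash A$. Consequently, for every $\Pi_2$-sentence $A$, if $\mathsf{PA}_0\vdash A$ then $\mathsf{HA}_0\vdash A$.
   Context: $\mathsf{HA}_0$ (resp. $\mathsf{PA}_0$) is the theory over intuitionistic (resp. classical) first-order logic with the basic axioms of arithmetic (successor, addition, multiplication, order) and induction restricted to formulas of the form $(D\to E)\to E$ with $D,E$ $\Sigma_1$-formulas. *)

theory Defs
  imports Main
begin

section \<open>First-order arithmetic: syntax (de Bruijn indices)\<close>

datatype trm = Var nat | Zero | Suc' trm | Plus trm trm | Times trm trm

datatype fm = Bot | Eq trm trm | Lt trm trm
  | Conj fm fm | Disj fm fm | Imp fm fm | All fm | Ex fm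

abbreviation Neg :: "fm \<Rightarrow> fm" where "Neg A \<equiv> Imp A Bot"
abbreviation Iff :: "fm \<Rightarrow> fm \<Rightarrow> fm" where "Iff A B \<equiv> Conj (Imp A B) (Imp B A)"

primrec trm_subst :: "(nat \<Rightarrow> trm) \<Rightarrow> trm \<Rightarrow> trm" where
  "trm_subst \<sigma> (Var n) = \<sigma> n"
| "trm_subst \<sigma> Zero = Zero"
| "trm_subst \<sigma> (Suc' t) = Suc' (trm_subst \<sigma> t)"
| "trm_subst \<sigma> (Plus s t) = Plus (trm_subst \<sigma> s) (trm_subst \<sigma> t)"
| "trm_subst \<sigma> (Times s t) = Times (trm_subst \<sigma> s) (trm_subst \<sigma> t)"

definition trm_lift :: "trm \<Rightarrow> trm" where
  "trm_lift t = trm_subst (\<lambda>n. Var (Suc n)) t"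

definition up :: "(nat \<Rightarrow> trm) \<Rightarrow> nat \<Rightarrow> trm" where
  "up \<sigma> n = (case n of 0 \<Rightarrow> Var 0 | Suc m \<Rightarrow> trm_lift (\<sigma> m))"

primrec fm_subst :: "(nat \<Rightarrow> trm) \<Rightarrow> fm \<Rightarrow> fm" where
  "fm_subst \<sigma> Bot = Bot"
| "fm_subst \<sigma> (Eq s t) = Eq (trm_subst \<sigma> s) (trm_subst \<sigma> t)"
| "fm_subst \<sigma> (Lt s t) = Lt (trm_subst \<sigma> s) (trm_subst \<sigma> t)"
| "fm_subst \<sigma> (Conj A B) = Conj (fm_subst \<sigma> A) (fm_subst \<sigma> B)"
| "fm_subst \<sigma> (Disj A B) = Disj (fm_subst \<sigma> A) (fm_subst \<sigma> B)"
| "fm_subst \<sigma> (Imp A B) = Imp (fm_subst \<sigma> A) (fm_subst \<sigma> B)"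
| "fm_subst \<sigma> (All A) = All (fm_subst (up \<sigma>) A)"
| "fm_subst \<sigma> (Ex A) = Ex (fm_subst (up \<sigma>) A)"

definition lift :: "fm \<Rightarrow> fm" where
  "lift A = fm_subst (\<lambda>n. Var (Suc n)) A"

definition inst :: "trm \<Rightarrow> fm \<Rightarrow> fm" where
  "inst t A = fm_subst (\<lambda>n. case n of 0 \<Rightarrow> t | Suc m \<Rightarrow> Var m) A"

primrec trm_closed_at :: "nat \<Rightarrow> trm \<Rightarrow> bool" where
  "trm_closed_at k (Var n) = (n < k)"
| "trm_closed_at k Zero = True"
| "trm_closed_at k (Suc' t) = trm_closed_at k t"
| "trm_closed_at k (Plus s t) = (trm_closed_at k s \<and> trm_closed_at k t)"
| "trm_closed_at k (Times s t) = (trm_closed_at k s \<and> trm_closed_at k t)"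

primrec closed_at :: "nat \<Rightarrow> fm \<Rightarrow> bool" where
  "closed_at k Bot = True"
| "closed_at k (Eq s t) = (trm_closed_at k s \<and> trm_closed_at k t)"
| "closed_at k (Lt s t) = (trm_closed_at k s \<and> trm_closed_at k t)"
| "closed_at k (Conj A B) = (closed_at k A \<and> closed_at k B)"
| "closed_at k (Disj A B) = (closed_at k A \<and> closed_at k B)"
| "closed_at k (Imp A B) = (closed_at k A \<and> closed_at k B)"
| "closed_at k (All A) = closed_at (Suc k) A"
| "closed_at k (Ex A) = closed_at (Suc k) A"

definition sentence :: "fm \<Rightarrow> bool" where
  "sentence A = closed_at 0 A"

definition BAll :: "trm \<Rightarrow> fm \<Rightarrow> fm" where
  "BAll t B = All (Imp (Lt (Var 0) (trm_lift t)) B)"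
definition BEx :: "trm \<Rightarrow> fm \<Rightarrow> fm" where
  "BEx t B = Ex (Conj (Lt (Var 0) (trm_lift t)) B)"

inductive Delta0 :: "fm \<Rightarrow> bool" where
  "Delta0 Bot"
| "Delta0 (Eq s t)"
| "Delta0 (Lt s t)"
| "Delta0 A \<Longrightarrow> Delta0 B \<Longrightarrow> Delta0 (Conj A B)"
| "Delta0 A \<Longrightarrow> Delta0 B \<Longrightarrow> Delta0 (Disj A B)"
| "Delta0 A \<Longrightarrow> Delta0 B \<Longrightarrow> Delta0 (Imp A B)"
| "Delta0 B \<Longrightarrow> Delta0 (BAll t B)"
| "Delta0 B \<Longrightarrow> Delta0 (BEx t B)"

inductive Sigma1 :: "fm \<Rightarrow> bool" where
  "Delta0 A \<Longrightarrow> Sigma1 A"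
| "Sigma1 A \<Longrightarrow> Sigma1 (Ex A)"

inductive Pi2 :: "fm \<Rightarrow> bool" where
  "Sigma1 A \<Longrightarrow> Pi2 A"
| "Pi2 A \<Longrightarrow> Pi2 (All A)"

abbreviation "vx \<equiv> Var 0"
abbreviation "vy \<equiv> Var 1"

text \<open>Basic axioms for successor, addition, multiplication and order (free variables are
  implicitly universally quantified, as generalisation is a rule).\<close>
definition basic_ax :: "fm set" where
  "basic_ax = {
     Neg (Eq (Suc' vx) Zero),
     Imp (Eq (Suc' vx) (Suc' vy)) (Eq vx vy),
     Eq (Plus vx Zero) vx,
     Eq (Plus vx (Suc' vy)) (Suc' (Plus vx vy)),
     Eq (Times vx Zero) Zero,
     Eq (Times vx (Suc' vy)) (Plus (Times vx vy) vx),
     Neg (Lt vx Zero),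
     Iff (Lt vx (Suc' vy)) (Disj (Lt vx vy) (Eq vx vy)) }"

text \<open>Induction axiom for A, where A's free variable 0 is the induction variable and the
  other free variables are parameters.\<close>
definition ind_ax :: "fm \<Rightarrow> fm" where
  "ind_ax A = Imp (Conj (inst Zero A)
                        (All (Imp A (fm_subst (\<lambda>n. case n of 0 \<Rightarrow> Suc' (Var 0) | Suc m \<Rightarrow> Var (Suc m)) A))))
                  (All A)"

definition axioms0 :: "fm set" where
  "axioms0 = basic_ax \<union> {ind_ax (Imp (Imp D E) E) | D E. Sigma1 D \<and> Sigma1 E}"

inductive ND :: "bool \<Rightarrow> fm set \<Rightarrow> fm list \<Rightarrow> fm \<Rightarrow> bool" where
  Hyp: "A \<in> set \<Gamma> \<Longrightarrow> ND c T \<Gamma> A"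
| Ax: "A \<in> T \<Longrightarrow> ND c T \<Gamma> A"
| BotE: "ND c T \<Gamma> Bot \<Longrightarrow> ND c T \<Gamma> A"
| LEM: "c \<Longrightarrow> ND c T \<Gamma> (Disj A (Neg A))"
| ConjI: "ND c T \<Gamma> A \<Longrightarrow> ND c T \<Gamma> B \<Longrightarrow> ND c T \<Gamma> (Conj A B)"
| ConjE1: "ND c T \<Gamma> (Conj A B) \<Longrightarrow> ND c T \<Gamma> A"
| ConjE2: "ND c T \<Gamma> (Conj A B) \<Longrightarrow> ND c T \<Gamma> B"
| DisjI1: "ND c T \<Gamma> A \<Longrightarrow> ND c T \<Gamma> (Disj A B)"
| DisjI2: "ND c T \<Gamma> B \<Longrightarrow> ND c T \<Gamma> (Disj A B)"
| DisjE: "ND c T \<Gamma> (Disj A B) \<Longrightarrow> ND c T (A # \<Gamma>) C \<Longrightarrow> ND c T (B # \<Gamma>) C \<Longrightarrow> ND c T \<Gamma> C"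
| ImpI: "ND c T (A # \<Gamma>) B \<Longrightarrow> ND c T \<Gamma> (Imp A B)"
| ImpE: "ND c T \<Gamma> (Imp A B) \<Longrightarrow> ND c T \<Gamma> A \<Longrightarrow> ND c T \<Gamma> B"
| AllI: "ND c T (map lift \<Gamma>) A \<Longrightarrow> ND c T \<Gamma> (All A)"
| AllE: "ND c T \<Gamma> (All A) \<Longrightarrow> ND c T \<Gamma> (inst t A)"
| ExI: "ND c T \<Gamma> (inst t A) \<Longrightarrow> ND c T \<Gamma> (Ex A)"
| ExE: "ND c T \<Gamma> (Ex A) \<Longrightarrow> ND c T (A # map lift \<Gamma>) (lift B) \<Longrightarrow> ND c T \<Gamma> B"
| EqRefl: "ND c T \<Gamma> (Eq t t)"
| EqSubst: "ND c T \<Gamma> (Eq s t) \<Longrightarrow> ND c T \<Gamma> (inst s A) \<Longrightarrow> ND c T \<Gamma> (inst t A)"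

definition HA0_proves :: "fm \<Rightarrow> bool" where
  "HA0_proves A = ND False axioms0 [] A"

definition PA0_proves :: "fm \<Rightarrow> bool" where
  "PA0_proves A = ND True axioms0 [] A"

end

theory Submission
  imports Defs
begin

text \<open>Friedman's translation in Dragalin's form. For a \<open>\<Sigma>\<^sub>1\<close> formula \<open>F\<close>, the negative
  translation \<open>A\<^sup>F\<close> relative to \<open>F\<close> (\<open>\<bottom>\<close> read as \<open>F\<close>) turns classical derivations into
  intuitionistic ones. The translated basic axioms are derivable, and the translation of the
  induction axiom for \<open>(D \<rightarrow> E) \<rightarrow> E\<close> is equivalent to the induction axiom for
  \<open>(X \<rightarrow> F) \<rightarrow> F\<close>, where \<open>X\<close> is a \<open>\<Sigma>\<^sub>1\<close> form of \<open>D \<or> E\<close>; so \<open>HA\<^sub>0\<close> proves \<open>A\<^sup>F\<close>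
  whenever \<open>PA\<^sub>0\<close> proves \<open>A\<close>. Since \<open>\<Delta>\<^sub>0\<close> formulas are decidable in \<open>HA\<^sub>0\<close> (by \<open>\<Sigma>\<^sub>1\<close>
  induction), \<open>A\<^sup>F\<close> is equivalent to \<open>(A \<rightarrow> F) \<rightarrow> F\<close> for \<open>\<Sigma>\<^sub>1\<close> formulas \<open>A\<close>; taking
  \<open>F = A\<close> gives \<open>A\<close> itself. \<open>\<Pi>\<^sub>2\<close> formulas follow by generalisation.\<close>

section \<open>Substitution\<close>

lemma up_0 [simp]: "up \<sigma> 0 = Var 0"
  and up_Suc [simp]: "up \<sigma> (Suc n) = trm_lift (\<sigma> n)"
  by (simp_all add: up_def)

lemma trm_subst_trm_subst: "trm_subst \<sigma> (trm_subst \<tau> t) = trm_subst (\<lambda>n. trm_subst \<sigma> (\<tau> n)) t"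
  by (induction t) auto

lemma trm_subst_Var [simp]: "trm_subst Var t = t"
  by (induction t) auto

lemma up_up: "(\<lambda>n. trm_subst (up \<sigma>) (up \<tau> n)) = up (\<lambda>n. trm_subst \<sigma> (\<tau> n))"
  by (rule ext) (auto simp: up_def trm_lift_def trm_subst_trm_subst split: nat.split)

lemma fm_subst_fm_subst: "fm_subst \<sigma> (fm_subst \<tau> A) = fm_subst (\<lambda>n. trm_subst \<sigma> (\<tau> n)) A"
  by (induction A arbitrary: \<sigma> \<tau>) (auto simp: trm_subst_trm_subst up_up)

lemma up_Var: "up Var = Var"
  by (rule ext) (auto simp: up_def trm_lift_def split: nat.split)

lemma fm_subst_Var [simp]: "fm_subst Var A = A"
  by (induction A) (auto simp: up_Var)

lemma trm_subst_cong_closed: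
  "trm_closed_at k t \<Longrightarrow> (\<And>n. n < k \<Longrightarrow> \<sigma> n = \<tau> n) \<Longrightarrow> trm_subst \<sigma> t = trm_subst \<tau> t"
  by (induction t) auto

lemma fm_subst_cong_closed:
  "closed_at k A \<Longrightarrow> (\<And>n. n < k \<Longrightarrow> \<sigma> n = \<tau> n) \<Longrightarrow> fm_subst \<sigma> A = fm_subst \<tau> A"
proof (induction A arbitrary: k \<sigma> \<tau>)
  case (All A)
  then have "fm_subst (up \<sigma>) A = fm_subst (up \<tau>) A"
    by (intro All.IH[of "Suc k"]) (auto simp: up_def split: nat.split)
  then show ?case by simp
next
  case (Ex A)
  then have "fm_subst (up \<sigma>) A = fm_subst (up \<tau>) A"
    by (intro Ex.IH[of "Suc k"]) (auto simp: up_def split: nat.split)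
  then show ?case by simp
next
  case (Eq s t)
  then show ?case using trm_subst_cong_closed[of k s \<sigma> \<tau>] trm_subst_cong_closed[of k t \<sigma> \<tau>] by simp
next
  case (Lt s t)
  then show ?case using trm_subst_cong_closed[of k s \<sigma> \<tau>] trm_subst_cong_closed[of k t \<sigma> \<tau>] by simp
qed (simp, metis closed_at.simps fm_subst.simps)+

lemma fm_subst_cong: "(\<And>n. \<sigma> n = \<tau> n) \<Longrightarrow> fm_subst \<sigma> A = fm_subst \<tau> A"
  by (metis ext)

definition shift_sub :: "nat \<Rightarrow> trm" where
  "shift_sub = (\<lambda>n. Var (Suc n))"

definition inst_sub :: "trm \<Rightarrow> nat \<Rightarrow> trm" where
  "inst_sub t = (\<lambda>n. case n of 0 \<Rightarrow> t | Suc m \<Rightarrow> Var m)"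

definition succ_sub :: "nat \<Rightarrow> trm" where
  "succ_sub = (\<lambda>n. case n of 0 \<Rightarrow> Suc' (Var 0) | Suc m \<Rightarrow> Var (Suc m))"

lemma shift_sub_apply: "shift_sub n = Var (Suc n)"
  by (simp add: shift_sub_def)

lemma inst_sub_0 [simp]: "inst_sub t 0 = t"
  and inst_sub_Suc [simp]: "inst_sub t (Suc n) = Var n"
  and inst_sub_numeral [simp]: "inst_sub t (numeral k) = Var (pred_numeral k)"
  by (simp_all add: inst_sub_def numeral_eq_Suc)

lemma succ_sub_0 [simp]: "succ_sub 0 = Suc' (Var 0)"
  and succ_sub_Suc [simp]: "succ_sub (Suc n) = Var (Suc n)"
  and succ_sub_numeral [simp]: "succ_sub (numeral k) = Var (numeral k)"
  by (simp_all add: succ_sub_def numeral_eq_Suc)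

lemma lift_eq: "lift A = fm_subst shift_sub A"
  by (simp add: lift_def shift_sub_def)

lemma inst_eq: "inst t A = fm_subst (inst_sub t) A"
  by (simp add: inst_def inst_sub_def)

lemma trm_lift_eq: "trm_lift t = trm_subst shift_sub t"
  by (simp add: trm_lift_def shift_sub_def)

lemma ind_ax_eq: "ind_ax A = Imp (Conj (inst Zero A) (All (Imp A (fm_subst succ_sub A)))) (All A)"
  by (simp add: ind_ax_def succ_sub_def)

lemma up_eq: "up \<sigma> = (\<lambda>n. case n of 0 \<Rightarrow> Var 0 | Suc m \<Rightarrow> trm_subst shift_sub (\<sigma> m))"
  by (rule ext) (simp add: up_def trm_lift_eq split: nat.split)

lemmas sub_simps = fm_subst_fm_subst trm_subst_trm_subst up_eq shift_sub_def inst_sub_def succ_sub_def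

lemma trm_lift_simps [simp]:
  "trm_lift (Var n) = Var (Suc n)"
  "trm_lift Zero = Zero"
  "trm_lift (Suc' t) = Suc' (trm_lift t)"
  by (simp_all add: trm_lift_def)

lemma trm_subst_inst_sub_trm_lift [simp]: "trm_subst (inst_sub u) (trm_lift s) = s"
  and trm_subst_succ_sub_trm_lift [simp]: "trm_subst succ_sub (trm_lift s) = trm_lift s"
  and trm_subst_up_trm_lift: "trm_subst (up \<sigma>) (trm_lift s) = trm_lift (trm_subst \<sigma> s)"
  by (simp_all add: trm_lift_eq sub_simps)

lemma fm_subst_lift: "fm_subst (up \<sigma>) (lift A) = lift (fm_subst \<sigma> A)"
  unfolding lift_eq by (simp add: sub_simps)

lemma fm_subst_inst: "fm_subst \<sigma> (inst t A) = inst (trm_subst \<sigma> t) (fm_subst (up \<sigma>) A)"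
  unfolding inst_eq by (simp add: sub_simps) (rule fm_subst_cong, simp add: sub_simps split: nat.split)

lemma inst_lift [simp]: "inst t (lift A) = A"
  unfolding inst_eq lift_eq by (simp add: sub_simps)

lemma fm_subst_succ_sub_lift [simp]: "fm_subst succ_sub (lift A) = lift A"
  unfolding lift_eq by (simp add: sub_simps)

lemma fm_subst_up_succ_sub: "fm_subst (up \<sigma>) (fm_subst succ_sub C) = fm_subst succ_sub (fm_subst (up \<sigma>) C)"
  by (simp add: sub_simps) (rule fm_subst_cong, simp add: sub_simps split: nat.split)

lemma fm_subst_ind_ax: "fm_subst \<sigma> (ind_ax C) = ind_ax (fm_subst (up \<sigma>) C)"
  unfolding ind_ax_eq by (simp add: fm_subst_inst fm_subst_up_succ_sub)

lemma lift_Bot: "lift Bot = Bot"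
  and lift_Disj: "lift (Disj A B) = Disj (lift A) (lift B)"
  and lift_Imp: "lift (Imp A B) = Imp (lift A) (lift B)"
  and lift_All: "lift (All A) = All (fm_subst (up shift_sub) A)"
  and lift_Ex: "lift (Ex A) = Ex (fm_subst (up shift_sub) A)"
  by (simp_all add: lift_eq)

lemma inst_simps [simp]:
  "inst t Bot = Bot"
  "inst t (Conj A B) = Conj (inst t A) (inst t B)"
  "inst t (Disj A B) = Disj (inst t A) (inst t B)"
  "inst t (Imp A B) = Imp (inst t A) (inst t B)"
  by (simp_all add: inst_eq)

lemma inst_Var0_up_shift [simp]: "inst (Var 0) (fm_subst (up shift_sub) A) = A"
proof -
  have "fm_subst (\<lambda>n. trm_subst (inst_sub (Var 0)) (up shift_sub n)) A = fm_subst Var A"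
    by (rule fm_subst_cong) (simp add: sub_simps split: nat.split)
  then show ?thesis unfolding inst_eq by (simp add: fm_subst_fm_subst)
qed

lemma inst_sub_Var0_up_shift [simp]: "fm_subst (inst_sub (Var 0)) (fm_subst (up shift_sub) A) = A"
  using inst_Var0_up_shift[of A] by (simp only: inst_eq)

lemma up_inst_up_shift [simp]: "fm_subst (up (inst_sub t)) (fm_subst (up shift_sub) A) = A"
proof -
  have "fm_subst (up (inst_sub t)) (fm_subst (up shift_sub) A) = fm_subst Var A"
    by (simp only: fm_subst_fm_subst) (rule fm_subst_cong, simp add: up_def trm_lift_def shift_sub_apply split: nat.split)
  then show ?thesis by simp
qed

lemma up_succ_up_shift [simp]:
  "fm_subst (up succ_sub) (fm_subst (up shift_sub) A) = fm_subst (up shift_sub) A"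
  by (simp add: fm_subst_fm_subst) (rule fm_subst_cong, simp add: up_def trm_lift_def shift_sub_apply split: nat.split)

lemma fm_subst_BAll: "fm_subst \<sigma> (BAll t B) = BAll (trm_subst \<sigma> t) (fm_subst (up \<sigma>) B)"
  and fm_subst_BEx: "fm_subst \<sigma> (BEx t B) = BEx (trm_subst \<sigma> t) (fm_subst (up \<sigma>) B)"
  by (simp_all add: BAll_def BEx_def trm_subst_up_trm_lift)

lemma Delta0_fm_subst: "Delta0 A \<Longrightarrow> Delta0 (fm_subst \<sigma> A)"
proof (induction A arbitrary: \<sigma> rule: Delta0.induct)
  case (7 B t) then show ?case by (simp only: fm_subst_BAll) (rule Delta0.intros)
next
  case (8 B t) then show ?case by (simp only: fm_subst_BEx) (rule Delta0.intros)
qed (auto intro: Delta0.intros)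

lemma Sigma1_fm_subst: "Sigma1 A \<Longrightarrow> Sigma1 (fm_subst \<sigma> A)"
  by (induction A arbitrary: \<sigma> rule: Sigma1.induct) (auto intro: Sigma1.intros Delta0_fm_subst)

lemma Sigma1_lift: "Sigma1 A \<Longrightarrow> Sigma1 (lift A)"
  by (simp add: lift_def Sigma1_fm_subst)

lemma ND_weaken: "ND c T \<Gamma> A \<Longrightarrow> set \<Gamma> \<subseteq> set \<Gamma>' \<Longrightarrow> ND c T \<Gamma>' A"
proof (induction arbitrary: \<Gamma>' rule: ND.induct)
  case (DisjE c T \<Gamma> A B C)
  then show ?case by (metis ND.DisjE insert_mono list.simps(15))
next
  case (ImpI c T A \<Gamma> B)
  then show ?case by (metis ND.ImpI insert_mono list.simps(15))
next
  case (AllI c T \<Gamma> A)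
  then show ?case by (metis ND.AllI image_mono list.set_map)
next
  case (ExE c T \<Gamma> A B)
  have "set (A # map lift \<Gamma>) \<subseteq> set (A # map lift \<Gamma>')" using ExE.prems by auto
  then show ?case using ExE by (metis ND.ExE)
next
  case (EqSubst c T \<Gamma> s t A)
  then show ?case by (metis ND.EqSubst)
qed (auto intro: ND.intros)

lemma ND_Nil_weaken: "ND c T [] A \<Longrightarrow> ND c T \<Gamma> A"
  using ND_weaken by fastforce

lemma ND_weaken_Cons: "ND c T \<Gamma> A \<Longrightarrow> ND c T (B # \<Gamma>) A"
  and ND_weaken_Cons2: "ND c T \<Gamma> A \<Longrightarrow> ND c T (C # B # \<Gamma>) A"
  and ND_weaken_second: "ND c T (B # \<Gamma>) A \<Longrightarrow> ND c T (B # C # \<Gamma>) A"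
  by (erule ND_weaken; auto)+

lemma hyp0: "ND c T (A # \<Gamma>) A"
  and hyp1: "ND c T (B # A # \<Gamma>) A"
  and hyp2: "ND c T (C # B # A # \<Gamma>) A"
  and hyp3: "ND c T (D # C # B # A # \<Gamma>) A"
  by (rule ND.Hyp; simp)+

lemma ND_cut: "ND c T \<Gamma> A \<Longrightarrow> ND c T (A # \<Gamma>) B \<Longrightarrow> ND c T \<Gamma> B"
  by (meson ND.ImpE ND.ImpI)

lemma ND_IffI: "ND c T (A # \<Gamma>) B \<Longrightarrow> ND c T (B # \<Gamma>) A \<Longrightarrow> ND c T \<Gamma> (Iff A B)"
  by (rule ND.ConjI; rule ND.ImpI)

lemma ND_IffD1: "ND c T \<Gamma> (Iff A B) \<Longrightarrow> ND c T \<Gamma> A \<Longrightarrow> ND c T \<Gamma> B"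
  and ND_IffD2: "ND c T \<Gamma> (Iff A B) \<Longrightarrow> ND c T \<Gamma> B \<Longrightarrow> ND c T \<Gamma> A"
  by (meson ND.ConjE1 ND.ConjE2 ND.ImpE)+

lemma ND_AllE_lift: "ND c T \<Gamma> (lift (All A)) \<Longrightarrow> ND c T \<Gamma> A"
  using ND.AllE[of c T \<Gamma> "fm_subst (up shift_sub) A" "Var 0"] by (simp add: lift_All)

lemma ND_ExI_lift: "ND c T \<Gamma> A \<Longrightarrow> ND c T \<Gamma> (lift (Ex A))"
  using ND.ExI[of c T \<Gamma> "Var 0" "fm_subst (up shift_sub) A"] by (simp add: lift_Ex)

lemma ND_EqSubst': "ND c T \<Gamma> (Eq s t) \<Longrightarrow> ND c T \<Gamma> X \<Longrightarrow> X = inst s A \<Longrightarrow> inst t A = Y \<Longrightarrow> ND c T \<Gamma> Y"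
  using ND.EqSubst by blast

lemma map_fm_subst_lift: "map (fm_subst (up \<sigma>)) (map lift \<Gamma>) = map lift (map (fm_subst \<sigma>) \<Gamma>)"
  by (simp add: fm_subst_lift)

lemma ND_fm_subst:
  assumes "ND c T \<Gamma> A" and "\<And>\<sigma> B \<Delta>. B \<in> T \<Longrightarrow> ND c T \<Delta> (fm_subst \<sigma> B)"
  shows "ND c T (map (fm_subst \<sigma>) \<Gamma>) (fm_subst \<sigma> A)"
  using assms
proof (induction arbitrary: \<sigma> rule: ND.induct)
  case (AllI c T \<Gamma> A)
  have "ND c T (map (fm_subst (up \<sigma>)) (map lift \<Gamma>)) (fm_subst (up \<sigma>) A)" using AllI by blast
  then have "ND c T (map lift (map (fm_subst \<sigma>) \<Gamma>)) (fm_subst (up \<sigma>) A)"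
    by (simp only: map_fm_subst_lift)
  then show ?case by (simp only: fm_subst.simps) (rule ND.AllI)
next
  case (AllE c T \<Gamma> A t)
  then show ?case by (simp add: fm_subst_inst ND.AllE)
next
  case (ExI c T \<Gamma> t A)
  then show ?case by (simp add: fm_subst_inst) (metis ND.ExI)
next
  case (ExE c T \<Gamma> A B)
  have "ND c T (map (fm_subst (up \<sigma>)) (A # map lift \<Gamma>)) (fm_subst (up \<sigma>) (lift B))" using ExE by blast
  then have "ND c T (fm_subst (up \<sigma>) A # map lift (map (fm_subst \<sigma>) \<Gamma>)) (lift (fm_subst \<sigma> B))"
    by (simp only: list.map map_fm_subst_lift fm_subst_lift)
  then show ?case using ExE ND.ExE by fastforce
next
  case (EqSubst c T \<Gamma> s t A)
  then show ?case by (simp add: fm_subst_inst) (metis ND.EqSubst)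
qed (auto intro: ND.intros)

lemma basic_ax_closed_at_2: "B \<in> basic_ax \<Longrightarrow> closed_at 2 B"
  by (auto simp: basic_ax_def)

lemma inst_up_inst_sub:
  "closed_at 2 B \<Longrightarrow> inst (\<sigma> 0) (fm_subst (up (inst_sub (\<sigma> 1))) B) = fm_subst \<sigma> B"
  unfolding inst_eq
  apply (simp add: fm_subst_fm_subst)
  apply (rule fm_subst_cong_closed[of 2], assumption)
  subgoal for n by (cases n) (auto simp: less_Suc_eq inst_sub_def trm_lift_eq sub_simps)
  done

text \<open>Basic axioms have the free variables 0 and 1 only, so their instances come from two
  universal instantiations of their generalisations.\<close>

lemma axioms0_fm_subst: "B \<in> axioms0 \<Longrightarrow> ND c axioms0 \<Delta> (fm_subst \<sigma> B)"
proof (cases "B \<in> basic_ax")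
  case True
  have "ND c axioms0 \<Delta> (All (All B))" by (intro ND.AllI) (rule ND.Ax, simp add: axioms0_def True)
  then have "ND c axioms0 \<Delta> (inst (\<sigma> 1) (All B))" by (rule ND.AllE)
  then have "ND c axioms0 \<Delta> (All (fm_subst (up (inst_sub (\<sigma> 1))) B))" by (simp add: inst_eq)
  then have "ND c axioms0 \<Delta> (inst (\<sigma> 0) (fm_subst (up (inst_sub (\<sigma> 1))) B))" by (rule ND.AllE)
  then show ?thesis using inst_up_inst_sub[OF basic_ax_closed_at_2[OF True]] by simp
next
  case False
  moreover assume "B \<in> axioms0"
  ultimately obtain D E where "B = ind_ax (Imp (Imp D E) E)" "Sigma1 D" "Sigma1 E"
    by (auto simp: axioms0_def)
  then show ?thesis by (auto simp: fm_subst_ind_ax axioms0_def intro!: ND.Ax Sigma1_fm_subst)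
qed

lemma ND_axioms0_fm_subst:
  "ND c axioms0 \<Gamma> A \<Longrightarrow> ND c axioms0 (map (fm_subst \<sigma>) \<Gamma>) (fm_subst \<sigma> A)"
  using ND_fm_subst axioms0_fm_subst by blast

lemma ND_axioms0_fm_subst_Nil: "ND c axioms0 [] A \<Longrightarrow> ND c axioms0 \<Gamma> (fm_subst \<sigma> A)"
  using ND_axioms0_fm_subst[of c "[]" A \<sigma>] ND_Nil_weaken by fastforce

lemma ND_axioms0_lift: "ND c axioms0 \<Gamma> A \<Longrightarrow> ND c axioms0 (map lift \<Gamma>) (lift A)"
  unfolding lift_eq by (rule ND_axioms0_fm_subst)

lemma ND_axioms0_All_open: "ND c axioms0 \<Gamma> (All A) \<Longrightarrow> ND c axioms0 (map lift \<Gamma>) A"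
  using ND_axioms0_lift ND_AllE_lift by blast

section \<open>Induction for \<open>\<Sigma>\<^sub>1\<close> formulas in \<open>HA\<^sub>0\<close>\<close>

abbreviation HA :: "fm list \<Rightarrow> fm \<Rightarrow> bool" where
  "HA \<equiv> ND False axioms0"

lemma ind_ax_transfer:
  assumes PQ: "ND c axioms0 [] (Iff P Q)" and ind_Q: "ND c axioms0 \<Gamma> (ind_ax Q)"
  shows "ND c axioms0 \<Gamma> (ind_ax P)"
proof -
  let ?H = "Conj (inst Zero P) (All (Imp P (fm_subst succ_sub P)))"
  have PQ_Zero: "ND c axioms0 \<Delta> (Iff (inst Zero P) (inst Zero Q))" for \<Delta>
    using ND_axioms0_fm_subst_Nil[OF PQ, of \<Delta> "inst_sub Zero"] by (simp add: inst_eq)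
  have PQ_succ: "ND c axioms0 \<Delta> (Iff (fm_subst succ_sub P) (fm_subst succ_sub Q))" for \<Delta>
    using ND_axioms0_fm_subst_Nil[OF PQ, of \<Delta> succ_sub] by simp
  have PQ': "ND c axioms0 \<Delta> (Iff P Q)" for \<Delta>
    using PQ ND_Nil_weaken by blast
  have base: "ND c axioms0 (?H # \<Gamma>) (inst Zero Q)"
    by (rule ND_IffD1[OF PQ_Zero]) (rule ND.ConjE1, rule hyp0)
  have step: "ND c axioms0 (?H # \<Gamma>) (All (Imp Q (fm_subst succ_sub Q)))"
  proof (rule ND.AllI, rule ND.ImpI)
    let ?L = "Q # map lift (?H # \<Gamma>)"
    have "ND c axioms0 ?L (lift ?H)" by (rule ND.Hyp) simp
    then have "ND c axioms0 ?L (lift (All (Imp P (fm_subst succ_sub P))))"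
      by (simp add: lift_eq) (rule ND.ConjE2)
    then have "ND c axioms0 ?L (Imp P (fm_subst succ_sub P))" by (rule ND_AllE_lift)
    moreover have "ND c axioms0 ?L P" by (rule ND_IffD2[OF PQ'], rule hyp0)
    ultimately have "ND c axioms0 ?L (fm_subst succ_sub P)" by (rule ND.ImpE)
    then show "ND c axioms0 ?L (fm_subst succ_sub Q)" by (rule ND_IffD1[OF PQ_succ])
  qed
  have "ND c axioms0 (?H # \<Gamma>) (All Q)"
    using ND_weaken_Cons[OF ind_Q[unfolded ind_ax_eq]] base step by (blast intro: ND.ImpE ND.ConjI)
  then have "ND c axioms0 (?H # \<Gamma>) (All P)"
    by (rule ND.AllI[OF ND_IffD2[OF PQ' ND_axioms0_All_open]])
  then show ?thesis unfolding ind_ax_eq by (rule ND.ImpI)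
qed

text \<open>\<open>E\<close> is intuitionistically equivalent to \<open>(\<bottom> \<rightarrow> E) \<rightarrow> E\<close>, an admitted induction formula.\<close>

lemma Sigma1_induct_rule:
  assumes "Sigma1 E" and base: "HA \<Gamma> (inst Zero E)"
    and step: "HA (map lift \<Gamma>) (Imp E (fm_subst succ_sub E))"
  shows "HA \<Gamma> (All E)"
proof -
  have "HA [] (Iff E (Imp (Imp Bot E) E))"
    by (rule ND_IffI)
      (rule ND.ImpI, rule hyp1, rule ND.ImpE[OF hyp0], rule ND.ImpI, rule ND.BotE, rule hyp0)
  moreover have "HA \<Gamma> (ind_ax (Imp (Imp Bot E) E))"
    using \<open>Sigma1 E\<close> by (intro ND.Ax) (auto simp: axioms0_def intro: Sigma1.intros Delta0.intros)
  ultimately have "HA \<Gamma> (ind_ax E)" by (rule ind_ax_transfer)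
  then show ?thesis unfolding ind_ax_eq by (rule ND.ImpE) (intro ND.ConjI base ND.AllI step)
qed

lemma Sigma1_induct_open:
  assumes "Sigma1 E" "HA [] (inst Zero E)" "HA [] (Imp E (fm_subst succ_sub E))"
  shows "HA [] E"
  using ND_axioms0_All_open[OF Sigma1_induct_rule[OF assms(1,2)]] assms(3) by simp

section \<open>Order and decidability of \<open>\<Delta>\<^sub>0\<close> formulas in \<open>HA\<^sub>0\<close>\<close>

lemma basic_ax_instance: "B \<in> basic_ax \<Longrightarrow> fm_subst \<sigma> B = X \<Longrightarrow> HA \<Gamma> X"
  using axioms0_fm_subst[of B False \<Gamma> \<sigma>] by (auto simp: axioms0_def)

lemma Lt_Zero_E: "HA \<Gamma> (Lt s Zero) \<Longrightarrow> HA \<Gamma> X"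
  by (rule ND.BotE, rule ND.ImpE[OF basic_ax_instance[where B="Neg (Lt vx Zero)" and \<sigma>="\<lambda>n. s"]])
    (auto simp: basic_ax_def)

lemma Lt_Suc_iff: "HA \<Gamma> (Iff (Lt s (Suc' t)) (Disj (Lt s t) (Eq s t)))"
  by (rule basic_ax_instance[where B="Iff (Lt vx (Suc' vy)) (Disj (Lt vx vy) (Eq vx vy))"
        and \<sigma>="\<lambda>n. [s, t] ! n"]) (auto simp: basic_ax_def)

lemma Lt_SucE: "HA \<Gamma> (Lt s (Suc' t)) \<Longrightarrow> HA (Lt s t # \<Gamma>) C \<Longrightarrow> HA (Eq s t # \<Gamma>) C \<Longrightarrow> HA \<Gamma> C"
  by (rule ND.DisjE[OF ND_IffD1[OF Lt_Suc_iff]])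

lemma Lt_SucI1: "HA \<Gamma> (Lt s t) \<Longrightarrow> HA \<Gamma> (Lt s (Suc' t))"
  and Lt_SucI2: "HA \<Gamma> (Eq s t) \<Longrightarrow> HA \<Gamma> (Lt s (Suc' t))"
  by (rule ND_IffD2[OF Lt_Suc_iff], erule ND.DisjI1 ND.DisjI2)+

lemma Lt_Suc_self: "HA \<Gamma> (Lt s (Suc' s))"
  by (rule Lt_SucI2, rule ND.EqRefl)

lemma Eq_sym: "HA \<Gamma> (Eq s t) \<Longrightarrow> HA \<Gamma> (Eq t s)"
  by (erule ND_EqSubst'[where A="Eq (Var 0) (trm_lift s)"], rule ND.EqRefl) (simp_all add: inst_eq)

text \<open>The order facts are proved as open formulas by induction on variable \<open>0\<close>, the other
  free variables being parameters, and then instantiated by substitution.\<close>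

lemma Lt_trans_open: "HA [] (Imp (Lt (Var 1) (Var 2)) (Imp (Lt (Var 2) (Var 0)) (Lt (Var 1) (Var 0))))"
proof (rule Sigma1_induct_open)
  show "Sigma1 (Imp (Lt (Var 1) (Var 2)) (Imp (Lt (Var 2) (Var 0)) (Lt (Var 1) (Var 0))))"
    by (intro Sigma1.intros Delta0.intros)
  show "HA [] (inst Zero (Imp (Lt (Var 1) (Var 2)) (Imp (Lt (Var 2) (Var 0)) (Lt (Var 1) (Var 0)))))"
    by (simp add: inst_eq) (intro ND.ImpI, rule Lt_Zero_E, rule hyp0)
  show "HA [] (Imp (Imp (Lt (Var 1) (Var 2)) (Imp (Lt (Var 2) (Var 0)) (Lt (Var 1) (Var 0))))
     (fm_subst succ_sub (Imp (Lt (Var 1) (Var 2)) (Imp (Lt (Var 2) (Var 0)) (Lt (Var 1) (Var 0))))))"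
    apply simp
    apply (intro ND.ImpI)
    apply (rule Lt_SucE[OF hyp0])
     apply (rule Lt_SucI1, rule ND.ImpE[OF ND.ImpE[OF hyp3 hyp2] hyp0])
    apply (rule Lt_SucI1, rule ND_EqSubst'[OF hyp0 hyp2, where A="Lt (Var 2) (Var 0)"])
     apply (simp_all add: inst_eq)
    done
qed

lemma Lt_trans: "HA \<Gamma> (Lt r s) \<Longrightarrow> HA \<Gamma> (Lt s t) \<Longrightarrow> HA \<Gamma> (Lt r t)"
  using ND_axioms0_fm_subst_Nil[OF Lt_trans_open, of \<Gamma> "\<lambda>n. [t, r, s] ! n"]
  by simp (meson ND.ImpE)

lemma Lt_irrefl_open: "HA [] (Neg (Lt (Var 0) (Var 0)))"
proof (rule Sigma1_induct_open)
  show "Sigma1 (Neg (Lt (Var 0) (Var 0)))" by (intro Sigma1.intros Delta0.intros)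
  show "HA [] (inst Zero (Neg (Lt (Var 0) (Var 0))))"
    by (simp add: inst_eq) (intro ND.ImpI, rule Lt_Zero_E, rule hyp0)
  show "HA [] (Imp (Neg (Lt (Var 0) (Var 0))) (fm_subst succ_sub (Neg (Lt (Var 0) (Var 0)))))"
    apply simp
    apply (intro ND.ImpI)
    apply (rule Lt_SucE[OF hyp0])
     apply (rule ND.ImpE[OF hyp2], rule Lt_trans[OF Lt_Suc_self hyp0])
    apply (rule ND.ImpE[OF hyp2], rule ND_EqSubst'[OF hyp0 Lt_Suc_self, where A="Lt (Var 1) (Var 0)"])
     apply (simp_all add: inst_eq)
    done
qed

lemma Lt_irreflE: "HA \<Gamma> (Lt t t) \<Longrightarrow> HA \<Gamma> X"
  using ND_axioms0_fm_subst_Nil[OF Lt_irrefl_open, of \<Gamma> "\<lambda>n. t"] by simp (meson ND.ImpE ND.BotE)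

lemma Zero_le_open: "HA [] (Disj (Eq Zero (Var 0)) (Lt Zero (Var 0)))"
proof (rule Sigma1_induct_open)
  show "Sigma1 (Disj (Eq Zero (Var 0)) (Lt Zero (Var 0)))" by (intro Sigma1.intros Delta0.intros)
  show "HA [] (inst Zero (Disj (Eq Zero (Var 0)) (Lt Zero (Var 0))))"
    by (simp add: inst_eq) (rule ND.DisjI1, rule ND.EqRefl)
  show "HA [] (Imp (Disj (Eq Zero (Var 0)) (Lt Zero (Var 0)))
     (fm_subst succ_sub (Disj (Eq Zero (Var 0)) (Lt Zero (Var 0)))))"
    apply simp
    apply (intro ND.ImpI)
    apply (rule ND.DisjE[OF hyp0])
     apply (rule ND.DisjI2, rule Lt_SucI2, rule hyp0)
    apply (rule ND.DisjI2, rule Lt_SucI1, rule hyp0)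
    done
qed

lemma Suc_le_open:
  "HA [] (Imp (Lt (Var 1) (Var 0)) (Disj (Lt (Suc' (Var 1)) (Var 0)) (Eq (Suc' (Var 1)) (Var 0))))"
proof (rule Sigma1_induct_open)
  show "Sigma1 (Imp (Lt (Var 1) (Var 0)) (Disj (Lt (Suc' (Var 1)) (Var 0)) (Eq (Suc' (Var 1)) (Var 0))))"
    by (intro Sigma1.intros Delta0.intros)
  show "HA [] (inst Zero (Imp (Lt (Var 1) (Var 0))
     (Disj (Lt (Suc' (Var 1)) (Var 0)) (Eq (Suc' (Var 1)) (Var 0)))))"
    by (simp add: inst_eq) (intro ND.ImpI, rule Lt_Zero_E, rule hyp0)
  show "HA [] (Imp (Imp (Lt (Var 1) (Var 0)) (Disj (Lt (Suc' (Var 1)) (Var 0)) (Eq (Suc' (Var 1)) (Var 0))))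
     (fm_subst succ_sub (Imp (Lt (Var 1) (Var 0))
        (Disj (Lt (Suc' (Var 1)) (Var 0)) (Eq (Suc' (Var 1)) (Var 0))))))"
    apply simp
    apply (intro ND.ImpI)
    apply (rule Lt_SucE[OF hyp0])
     apply (rule ND.DisjE[OF ND.ImpE[OF hyp2 hyp0]])
      apply (rule ND.DisjI1, rule Lt_SucI1, rule hyp0)
     apply (rule ND.DisjI1, rule Lt_SucI2, rule hyp0)
    apply (rule ND.DisjI2, rule ND_EqSubst'[OF hyp0 ND.EqRefl, where A="Eq (Suc' (Var 2)) (Suc' (Var 0))"])
     apply (simp_all add: inst_eq)
    done
qed

lemma Suc_le: "HA \<Gamma> (Lt s t) \<Longrightarrow> HA \<Gamma> (Disj (Lt (Suc' s) t) (Eq (Suc' s) t))"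
  using ND_axioms0_fm_subst_Nil[OF Suc_le_open, of \<Gamma> "\<lambda>n. [t, s] ! n"] by simp (meson ND.ImpE)

lemma Lt_trichotomy_open: "HA [] (Disj (Lt (Var 1) (Var 0)) (Disj (Eq (Var 1) (Var 0)) (Lt (Var 0) (Var 1))))"
proof (rule Sigma1_induct_open)
  show "Sigma1 (Disj (Lt (Var 1) (Var 0)) (Disj (Eq (Var 1) (Var 0)) (Lt (Var 0) (Var 1))))"
    by (intro Sigma1.intros Delta0.intros)
  show "HA [] (inst Zero (Disj (Lt (Var 1) (Var 0)) (Disj (Eq (Var 1) (Var 0)) (Lt (Var 0) (Var 1)))))"
    apply (simp add: inst_eq)
    apply (rule ND.DisjE[OF Zero_le_open])
     apply (rule ND.DisjI2, rule ND.DisjI1, rule Eq_sym, rule hyp0)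
    apply (rule ND.DisjI2, rule ND.DisjI2, rule hyp0)
    done
  show "HA [] (Imp (Disj (Lt (Var 1) (Var 0)) (Disj (Eq (Var 1) (Var 0)) (Lt (Var 0) (Var 1))))
     (fm_subst succ_sub (Disj (Lt (Var 1) (Var 0)) (Disj (Eq (Var 1) (Var 0)) (Lt (Var 0) (Var 1))))))"
    apply simp
    apply (intro ND.ImpI)
    apply (rule ND.DisjE[OF hyp0])
     apply (rule ND.DisjI1, rule Lt_SucI1, rule hyp0)
    apply (rule ND.DisjE[OF hyp0])
     apply (rule ND.DisjI1, rule Lt_SucI2, rule hyp0)
    apply (rule ND.DisjE[OF Suc_le[OF hyp0]])
     apply (rule ND.DisjI2, rule ND.DisjI2, rule hyp0)
    apply (rule ND.DisjI2, rule ND.DisjI1, rule Eq_sym, rule hyp0)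
    done
qed

lemma Lt_trichotomy: "HA \<Gamma> (Disj (Lt s t) (Disj (Eq s t) (Lt t s)))"
  using ND_axioms0_fm_subst_Nil[OF Lt_trichotomy_open, of \<Gamma> "\<lambda>n. [t, s] ! n"] by simp

abbreviation HA_decidable :: "fm \<Rightarrow> bool" where
  "HA_decidable A \<equiv> HA [] (Disj A (Neg A))"

lemma Eq_decidable: "HA_decidable (Eq s t)"
  apply (rule ND.DisjE[OF Lt_trichotomy[of _ s t]])
   apply (rule ND.DisjI2, rule ND.ImpI, rule Lt_irreflE[of _ t])
   apply (rule ND_EqSubst'[OF hyp0 hyp1, where A="Lt (Var 0) (trm_lift t)"], simp_all add: inst_eq)
  apply (rule ND.DisjE[OF hyp0])
   apply (rule ND.DisjI1, rule hyp0)
  apply (rule ND.DisjI2, rule ND.ImpI, rule Lt_irreflE[of _ t])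
  apply (rule ND_EqSubst'[OF hyp0 hyp1, where A="Lt (trm_lift t) (Var 0)"], simp_all add: inst_eq)
  done

lemma Lt_decidable: "HA_decidable (Lt s t)"
  apply (rule ND.DisjE[OF Lt_trichotomy[of _ s t]])
   apply (rule ND.DisjI1, rule hyp0)
  apply (rule ND.DisjE[OF hyp0])
   apply (rule ND.DisjI2, rule ND.ImpI, rule Lt_irreflE[of _ t])
   apply (rule ND_EqSubst'[OF hyp1 hyp0, where A="Lt (Var 0) (trm_lift t)"], simp_all add: inst_eq)
  apply (rule ND.DisjI2, rule ND.ImpI, rule Lt_irreflE[of _ t])
  apply (rule Lt_trans[OF hyp1 hyp0])
  done

lemma Conj_decidable: "HA_decidable A \<Longrightarrow> HA_decidable B \<Longrightarrow> HA_decidable (Conj A B)"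
  apply (erule ND.DisjE)
   apply (rule ND.DisjE[OF ND_Nil_weaken], assumption)
    apply (rule ND.DisjI1, rule ND.ConjI, rule hyp1, rule hyp0)
   apply (rule ND.DisjI2, rule ND.ImpI, rule ND.ImpE[OF hyp1], rule ND.ConjE2, rule hyp0)
  apply (rule ND.DisjI2, rule ND.ImpI, rule ND.ImpE[OF hyp1], rule ND.ConjE1, rule hyp0)
  done

lemma Disj_decidable: "HA_decidable A \<Longrightarrow> HA_decidable B \<Longrightarrow> HA_decidable (Disj A B)"
  apply (erule ND.DisjE)
   apply (rule ND.DisjI1, rule ND.DisjI1, rule hyp0)
  apply (rule ND.DisjE[OF ND_Nil_weaken], assumption)
   apply (rule ND.DisjI1, rule ND.DisjI2, rule hyp0)
  apply (rule ND.DisjI2, rule ND.ImpI, rule ND.DisjE[OF hyp0])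
   apply (rule ND.ImpE[OF hyp3 hyp0])
  apply (rule ND.ImpE[OF hyp2 hyp0])
  done

lemma Imp_decidable: "HA_decidable A \<Longrightarrow> HA_decidable B \<Longrightarrow> HA_decidable (Imp A B)"
  apply (erule ND.DisjE)
   apply (rule ND.DisjE[OF ND_Nil_weaken], assumption)
    apply (rule ND.DisjI1, rule ND.ImpI, rule hyp1)
   apply (rule ND.DisjI2, rule ND.ImpI, rule ND.ImpE[OF hyp1], rule ND.ImpE[OF hyp0 hyp2])
  apply (rule ND.DisjI1, rule ND.ImpI, rule ND.BotE, rule ND.ImpE[OF hyp1 hyp0])
  done

text \<open>\<open>eq_motive_sub\<close> turns a formula \<open>B\<close> with free variable \<open>0\<close> into a motive for
  \<open>EqSubst\<close>: instantiating the new bound variable by \<open>Var 1\<close> gives \<open>lift B\<close>, by \<open>Var 0\<close> gives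
  \<open>B\<close> as seen under one more binder.\<close>

definition eq_motive_sub :: "nat \<Rightarrow> trm" where
  "eq_motive_sub = (\<lambda>k. case k of 0 \<Rightarrow> Var 0 | Suc m \<Rightarrow> Var (Suc (Suc (Suc m))))"

lemma inst_Var1_eq_motive [simp]: "inst (Var (Suc 0)) (fm_subst eq_motive_sub B) = lift B"
  unfolding inst_eq lift_eq
  by (simp add: fm_subst_fm_subst) (rule fm_subst_cong, simp add: eq_motive_sub_def shift_sub_def split: nat.split)

lemma inst_Var0_eq_motive [simp]: "inst (Var 0) (fm_subst eq_motive_sub B) = fm_subst (up shift_sub) B"
  unfolding inst_eq
  by (simp add: fm_subst_fm_subst)
    (rule fm_subst_cong, simp add: eq_motive_sub_def up_def trm_lift_def shift_sub_def split: nat.split)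

lemma bounded_All_dichotomy_open:
  assumes "Delta0 B" and dec: "HA_decidable B"
  shows "HA [] (Disj (All (Imp (Lt (Var 0) (Var 1)) (fm_subst (up shift_sub) B)))
                     (Ex (Conj (Lt (Var 0) (Var 1)) (Neg (fm_subst (up shift_sub) B)))))"
    (is "HA [] ?C")
proof (rule Sigma1_induct_open)
  have "Delta0 (Disj (BAll (Var 0) (fm_subst (up shift_sub) B)) (BEx (Var 0) (Neg (fm_subst (up shift_sub) B))))"
    by (intro Delta0.intros Delta0_fm_subst \<open>Delta0 B\<close>)
  then show "Sigma1 ?C" by (simp add: BAll_def BEx_def Sigma1.intros)
  show "HA [] (inst Zero ?C)"
    by (simp add: inst_eq) (rule ND.DisjI1, rule ND.AllI, rule ND.ImpI, rule Lt_Zero_E, rule hyp0)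
  show "HA [] (Imp ?C (fm_subst succ_sub ?C))"
    apply simp
    apply (rule ND.ImpI)
    apply (rule ND.DisjE[OF hyp0])
     apply (rule ND.DisjE[OF ND_Nil_weaken[OF dec]])
      apply (rule ND.DisjI1, rule ND.AllI, rule ND.ImpI)
      apply (rule Lt_SucE[OF hyp0])
       apply (rule ND.ImpE[OF ND_AllE_lift[of _ _ _ "Imp (Lt (Var 0) (Var (Suc 0))) (fm_subst (up shift_sub) B)"]])
        apply (rule ND.Hyp, simp)
       apply (rule hyp0)
      apply (rule ND_EqSubst'[OF Eq_sym[OF hyp0], where A="fm_subst eq_motive_sub B" and X="lift B"])
        apply (rule ND.Hyp, simp)
       apply simp
      apply simp
     apply (rule ND.DisjI2, rule ND.ExI[where t="Var 0"])
     apply (simp add: inst_eq)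
     apply (rule ND.ConjI, rule Lt_Suc_self, rule hyp0)
    apply (rule ND.ExE[OF hyp0])
    apply (simp only: lift_Disj)
    apply (rule ND.DisjI2, rule ND_ExI_lift, rule ND.ConjI)
     apply (rule Lt_SucI1, rule ND.ConjE1, rule hyp0)
    apply (rule ND.ConjE2, rule hyp0)
    done
qed

lemma bounded_Ex_dichotomy_open:
  assumes "Delta0 B" and dec: "HA_decidable B"
  shows "HA [] (Disj (Ex (Conj (Lt (Var 0) (Var 1)) (fm_subst (up shift_sub) B)))
                     (All (Imp (Lt (Var 0) (Var 1)) (Neg (fm_subst (up shift_sub) B)))))"
    (is "HA [] ?C")
proof (rule Sigma1_induct_open)
  have "Delta0 (Disj (BEx (Var 0) (fm_subst (up shift_sub) B)) (BAll (Var 0) (Neg (fm_subst (up shift_sub) B))))"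
    by (intro Delta0.intros Delta0_fm_subst \<open>Delta0 B\<close>)
  then show "Sigma1 ?C" by (simp add: BAll_def BEx_def Sigma1.intros)
  show "HA [] (inst Zero ?C)"
    by (simp add: inst_eq) (rule ND.DisjI2, rule ND.AllI, rule ND.ImpI, rule Lt_Zero_E, rule hyp0)
  show "HA [] (Imp ?C (fm_subst succ_sub ?C))"
    apply simp
    apply (rule ND.ImpI)
    apply (rule ND.DisjE[OF hyp0])
     apply (rule ND.ExE[OF hyp0])
     apply (simp only: lift_Disj)
     apply (rule ND.DisjI1, rule ND_ExI_lift, rule ND.ConjI)
      apply (rule Lt_SucI1, rule ND.ConjE1, rule hyp0)
     apply (rule ND.ConjE2, rule hyp0)
    apply (rule ND.DisjE[OF ND_Nil_weaken[OF dec]])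
     apply (rule ND.DisjI1, rule ND.ExI[where t="Var 0"])
     apply (simp add: inst_eq)
     apply (rule ND.ConjI, rule Lt_Suc_self, rule hyp0)
    apply (rule ND.DisjI2, rule ND.AllI, rule ND.ImpI)
    apply (rule Lt_SucE[OF hyp0])
     apply (rule ND.ImpE[OF ND_AllE_lift[of _ _ _ "Imp (Lt (Var 0) (Var (Suc 0))) (Neg (fm_subst (up shift_sub) B))"]])
      apply (rule ND.Hyp, simp)
     apply (rule hyp0)
    apply (rule ND_EqSubst'[OF Eq_sym[OF hyp0], where A="Neg (fm_subst eq_motive_sub B)" and X="lift (Neg B)"])
      apply (rule ND.Hyp, simp)
     apply (simp add: lift_Imp lift_Bot)
    apply simp
    done
qed

lemma BAll_or_BEx_Neg: "Delta0 B \<Longrightarrow> HA_decidable B \<Longrightarrow> HA \<Gamma> (Disj (BAll t B) (BEx t (Neg B)))"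
  using ND_axioms0_fm_subst_Nil[OF bounded_All_dichotomy_open, of B \<Gamma> "inst_sub t"]
  by (simp add: BAll_def BEx_def)

lemma BEx_or_BAll_Neg: "Delta0 B \<Longrightarrow> HA_decidable B \<Longrightarrow> HA \<Gamma> (Disj (BEx t B) (BAll t (Neg B)))"
  using ND_axioms0_fm_subst_Nil[OF bounded_Ex_dichotomy_open, of B \<Gamma> "inst_sub t"]
  by (simp add: BAll_def BEx_def)

lemma BAll_decidable: "Delta0 B \<Longrightarrow> HA_decidable B \<Longrightarrow> HA_decidable (BAll t B)"
  apply (rule ND.DisjE[OF BAll_or_BEx_Neg], assumption+)
   apply (rule ND.DisjI1, rule hyp0)
  apply (rule ND.DisjI2, rule ND.ImpI)
  apply (rule ND.ExE[where A="Conj (Lt (Var 0) (trm_lift t)) (Neg B)"])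
   apply (rule ND.Hyp, simp add: BEx_def)
  apply (simp only: lift_Bot)
  apply (rule ND.ImpE[OF ND.ConjE2[OF hyp0]])
  apply (rule ND.ImpE[OF ND_AllE_lift[of _ _ _ "Imp (Lt (Var 0) (trm_lift t)) B"]])
   apply (rule ND.Hyp, simp add: BAll_def)
  apply (rule ND.ConjE1[OF hyp0])
  done

lemma BEx_decidable: "Delta0 B \<Longrightarrow> HA_decidable B \<Longrightarrow> HA_decidable (BEx t B)"
  apply (rule ND.DisjE[OF BEx_or_BAll_Neg], assumption+)
   apply (rule ND.DisjI1, rule hyp0)
  apply (rule ND.DisjI2, rule ND.ImpI)
  apply (rule ND.ExE[where A="Conj (Lt (Var 0) (trm_lift t)) B"])
   apply (rule ND.Hyp, simp add: BEx_def)
  apply (simp only: lift_Bot)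
  apply (rule ND.ImpE[OF ND.ImpE[OF ND_AllE_lift[of _ _ _ "Imp (Lt (Var 0) (trm_lift t)) (Neg B)"]]])
    apply (rule ND.Hyp, simp add: BAll_def)
   apply (rule ND.ConjE1[OF hyp0])
  apply (rule ND.ConjE2[OF hyp0])
  done

lemma Delta0_decidable: "Delta0 A \<Longrightarrow> HA_decidable A"
proof (induction rule: Delta0.induct)
  case 1
  then show ?case by (rule ND.DisjI2, rule ND.ImpI, rule hyp0)
qed (auto intro: Eq_decidable Lt_decidable Conj_decidable Disj_decidable Imp_decidable
    BAll_decidable BEx_decidable)

section \<open>The Friedman--Dragalin translation\<close>

abbreviation NN :: "fm \<Rightarrow> fm \<Rightarrow> fm" where
  "NN F X \<equiv> Imp (Imp X F) F"

primrec tr :: "fm \<Rightarrow> fm \<Rightarrow> fm" where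
  "tr Bot F = F"
| "tr (Eq s t) F = NN F (Eq s t)"
| "tr (Lt s t) F = NN F (Lt s t)"
| "tr (Conj A B) F = Conj (tr A F) (tr B F)"
| "tr (Disj A B) F = Imp (Conj (Imp (tr A F) F) (Imp (tr B F) F)) F"
| "tr (Imp A B) F = Imp (tr A F) (tr B F)"
| "tr (All A) F = All (tr A (lift F))"
| "tr (Ex A) F = Imp (All (Imp (tr A (lift F)) (lift F))) F"

lemma tr_fm_subst: "fm_subst \<sigma> (tr A F) = tr (fm_subst \<sigma> A) (fm_subst \<sigma> F)"
  by (induction A arbitrary: \<sigma> F) (simp_all add: fm_subst_lift)

lemma tr_lift: "lift (tr A F) = tr (lift A) (lift F)"
  unfolding lift_def by (rule tr_fm_subst)

lemma map_tr_lift: "map (\<lambda>X. tr X (lift F)) (map lift \<Gamma>) = map lift (map (\<lambda>X. tr X F) \<Gamma>)"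
  by (simp add: tr_lift)

lemma tr_inst: "inst t (tr A (lift F)) = tr (inst t A) F"
  unfolding inst_def using tr_fm_subst inst_lift by (metis inst_def)

lemma tr_ind_ax: "tr (ind_ax C) F = ind_ax (tr C (lift F))"
  unfolding ind_ax_eq by (simp add: tr_inst tr_fm_subst)

lemma tr_of_F: "F \<in> set \<Gamma> \<Longrightarrow> ND c T \<Gamma> (tr A F)"
  by (induction A arbitrary: F \<Gamma>) (simp_all add: ND.Hyp ND.ImpI ND.ConjI ND.AllI)

lemma tr_stable: "ND c T \<Gamma> (Imp (NN F (tr A F)) (tr A F))"
proof (induction A arbitrary: F \<Gamma>)
  case Bot
  show ?case by simp (rule ND.ImpI, rule ND.ImpE[OF hyp0], rule ND.ImpI, rule hyp0)
next
  case (Conj A B)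
  show ?case
    apply simp
    apply (rule ND.ImpI, rule ND.ConjI)
     apply (rule ND.ImpE[OF Conj.IH(1)])
     apply (rule ND.ImpI, rule ND.ImpE[OF hyp1], rule ND.ImpI, rule ND.ImpE[OF hyp1], rule ND.ConjE1, rule hyp0)
    apply (rule ND.ImpE[OF Conj.IH(2)])
    apply (rule ND.ImpI, rule ND.ImpE[OF hyp1], rule ND.ImpI, rule ND.ImpE[OF hyp1], rule ND.ConjE2, rule hyp0)
    done
next
  case (Imp A B)
  show ?case
    apply simp
    apply (rule ND.ImpI, rule ND.ImpI)
    apply (rule ND.ImpE[OF Imp.IH(2)])
    apply (rule ND.ImpI, rule ND.ImpE[OF hyp2], rule ND.ImpI, rule ND.ImpE[OF hyp1], rule ND.ImpE[OF hyp0 hyp2])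
    done
next
  case (All A)
  show ?case
    apply simp
    apply (rule ND.ImpI, rule ND.AllI)
    apply (rule ND.ImpE[OF All.IH], rule ND.ImpI)
    apply (rule ND.ImpE[where A="Imp (lift (All (tr A (lift F)))) (lift F)"])
     apply (rule ND.Hyp, simp add: lift_Imp)
    apply (rule ND.ImpI, rule ND.ImpE[OF hyp1], rule ND_AllE_lift, rule hyp0)
    done
qed (simp_all, (rule ND.ImpI, rule ND.ImpI, rule ND.ImpE[OF hyp1], rule ND.ImpI, rule ND.ImpE[OF hyp0 hyp1])+)

lemma tr_by_contradiction: "ND c T (Imp (tr A F) F # \<Gamma>) F \<Longrightarrow> ND c T \<Gamma> (tr A F)"
  by (rule ND.ImpE[OF tr_stable], rule ND.ImpI)

lemma tr_LEM: "ND c T \<Gamma> (tr (Disj A (Neg A)) F)"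
  by simp (rule ND.ImpI, rule ND.ImpE[OF ND.ConjE2[OF hyp0] ND.ConjE1[OF hyp0]])

lemma tr_DisjI1: "ND c T \<Gamma> (tr A F) \<Longrightarrow> ND c T \<Gamma> (tr (Disj A B) F)"
  and tr_DisjI2: "ND c T \<Gamma> (tr B F) \<Longrightarrow> ND c T \<Gamma> (tr (Disj A B) F)"
  by simp_all (rule ND.ImpI, rule ND.ImpE[OF ND.ConjE1[OF hyp0] ND_weaken_Cons] ND.ImpE[OF ND.ConjE2[OF hyp0] ND_weaken_Cons], assumption)+

lemma tr_DisjE:
  assumes "ND c T \<Gamma> (tr (Disj A B) F)"
    and "ND c T (tr A F # \<Gamma>) (tr C F)" and "ND c T (tr B F # \<Gamma>) (tr C F)"
  shows "ND c T \<Gamma> (tr C F)"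
  apply (rule tr_by_contradiction)
  apply (rule ND.ImpE[OF ND_weaken_Cons[OF assms(1)[simplified]]])
  apply (rule ND.ConjI)
   apply (rule ND.ImpI, rule ND.ImpE[OF hyp1], rule ND_weaken_second[OF assms(2)])
  apply (rule ND.ImpI, rule ND.ImpE[OF hyp1], rule ND_weaken_second[OF assms(3)])
  done

lemma tr_ExI:
  assumes "ND c T \<Gamma> (tr (inst t A) F)"
  shows "ND c T \<Gamma> (tr (Ex A) F)"
proof -
  have "ND c T (All (Imp (tr A (lift F)) (lift F)) # \<Gamma>) (inst t (Imp (tr A (lift F)) (lift F)))"
    by (rule ND.AllE, rule hyp0)
  then have "ND c T (All (Imp (tr A (lift F)) (lift F)) # \<Gamma>) (Imp (tr (inst t A) F) F)"
    by (simp add: tr_inst)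
  then show ?thesis by simp (rule ND.ImpI, erule ND.ImpE, rule ND_weaken_Cons[OF assms])
qed

lemma tr_ExE:
  assumes "ND c T \<Gamma> (tr (Ex A) F)" and "ND c T (tr A (lift F) # map lift \<Gamma>) (lift (tr B F))"
  shows "ND c T \<Gamma> (tr B F)"
  apply (rule tr_by_contradiction)
  apply (rule ND.ImpE[OF ND_weaken_Cons[OF assms(1)[simplified]]])
  apply (rule ND.AllI, simp only: list.map, rule ND.ImpI)
  apply (rule ND.ImpE[where A="lift (tr B F)"])
   apply (rule ND.Hyp, simp add: lift_Imp)
  apply (rule ND_weaken[OF assms(2)], auto)
  done

lemma tr_EqSubst:
  assumes "ND c T \<Gamma> (tr (Eq s t) F)" and "ND c T \<Gamma> (tr (inst s A) F)"
  shows "ND c T \<Gamma> (tr (inst t A) F)"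
proof (rule tr_by_contradiction)
  let ?\<Delta> = "Eq s t # Imp (tr (inst t A) F) F # \<Gamma>"
  have "ND c T ?\<Delta> (inst t (tr A (lift F)))"
    by (rule ND.EqSubst[OF hyp0]) (use ND_weaken_Cons2[OF assms(2)] in \<open>simp add: tr_inst\<close>)
  then have "ND c T ?\<Delta> F" by (simp add: tr_inst) (rule ND.ImpE[OF hyp1])
  then show "ND c T (Imp (tr (inst t A) F) F # \<Gamma>) F"
    using ND_weaken_Cons[OF assms(1)] by simp (rule ND.ImpE, assumption, rule ND.ImpI)
qed

text \<open>The equation \<open>T' = T\<close> keeps the theory fixed during the rule induction.\<close>

lemma tr_sound:
  assumes "ND c T \<Gamma> A" and ax: "\<And>B \<Delta> G. B \<in> T \<Longrightarrow> Sigma1 G \<Longrightarrow> ND False T \<Delta> (tr B G)"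
    and "Sigma1 F"
  shows "ND False T (map (\<lambda>X. tr X F) \<Gamma>) (tr A F)"
proof -
  have "T' = T \<Longrightarrow> Sigma1 F \<Longrightarrow> ND False T (map (\<lambda>X. tr X F) \<Gamma>) (tr A F)" if "ND c T' \<Gamma> A" for T'
    using that
  proof (induction arbitrary: F rule: ND.induct)
    case (Hyp A \<Gamma> c T')
    then show ?case by (auto intro: ND.Hyp)
  next
    case (Ax A c T' \<Gamma>)
    then show ?case using ax by simp
  next
    case (LEM c T' \<Gamma> A)
    show ?case by (rule tr_LEM)
  next
    case (ConjI c T' \<Gamma> A B)
    then show ?case by (simp add: ND.ConjI)
  next
    case (ConjE1 c T' \<Gamma> A B)
    then show ?case by (simp add: ND.ConjE1[of _ _ _ _ "tr B F"])
  next
    case (ConjE2 c T' \<Gamma> A B)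
    then show ?case by (simp add: ND.ConjE2[of _ _ _ "tr A F"])
  next
    case (DisjI1 c T' \<Gamma> A B)
    show ?case by (rule tr_DisjI1) (use DisjI1 in simp)
  next
    case (DisjI2 c T' \<Gamma> B A)
    show ?case by (rule tr_DisjI2) (use DisjI2 in simp)
  next
    case (ImpI c T' A \<Gamma> B)
    then show ?case by (simp add: ND.ImpI)
  next
    case (ImpE c T' \<Gamma> A B)
    then show ?case by (simp add: ND.ImpE[of _ _ _ "tr A F"])
  next
    case (EqRefl c T' \<Gamma> t)
    show ?case by simp (rule ND.ImpI, rule ND.ImpE[OF hyp0 ND.EqRefl])
  next
    case (BotE c T' \<Gamma> A)
    then have "ND False T (map (\<lambda>X. tr X F) \<Gamma>) F" by simp
    then show ?case by (rule ND_cut) (rule tr_of_F, simp)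
  next
    case (DisjE c T' \<Gamma> A B C)
    show ?case by (rule tr_DisjE[of _ _ _ A B]) (use DisjE in simp_all)
  next
    case (AllI c T' \<Gamma> A)
    then have "ND False T (map lift (map (\<lambda>X. tr X F) \<Gamma>)) (tr A (lift F))"
      by (simp only: map_tr_lift[symmetric] Sigma1_lift)
    then show ?case by (simp only: tr.simps) (rule ND.AllI)
  next
    case (AllE c T' \<Gamma> A t)
    then show ?case by (simp add: tr_inst[symmetric] ND.AllE)
  next
    case (ExI c T' \<Gamma> t A)
    show ?case by (rule tr_ExI) (use ExI in simp)
  next
    case (ExE c T' \<Gamma> A B)
    then have body: "ND False T (tr A (lift F) # map lift (map (\<lambda>X. tr X F) \<Gamma>)) (lift (tr B F))"
      using Sigma1_lift by (simp only: list.map map_tr_lift[symmetric] tr_lift)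
    show ?case by (rule tr_ExE[of _ _ _ A, OF _ body]) (use ExE in simp)
  next
    case (EqSubst c T' \<Gamma> s t A)
    show ?case by (rule tr_EqSubst[of _ _ _ s]) (use EqSubst in simp_all)
  qed
  then show ?thesis using assms by blast
qed

abbreviation tr_equiv :: "fm \<Rightarrow> fm \<Rightarrow> bool" where
  "tr_equiv A G \<equiv> HA [] (Iff (tr A G) (NN G A))"

lemma tr_equivD: "tr_equiv A G \<Longrightarrow> HA \<Gamma> (tr A G) \<Longrightarrow> HA \<Gamma> (NN G A)"
  and tr_equivI: "tr_equiv A G \<Longrightarrow> HA \<Gamma> (NN G A) \<Longrightarrow> HA \<Gamma> (tr A G)"
  by (erule ND_IffD1[OF ND_Nil_weaken] ND_IffD2[OF ND_Nil_weaken], assumption)+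

lemma tr_equiv_Bot: "tr_equiv Bot G"
  apply simp
  apply (rule ND_IffI)
   apply (rule ND.ImpI, rule hyp1)
  apply (rule ND.ImpE[OF hyp0], rule ND.ImpI, rule ND.BotE, rule hyp0)
  done

lemma tr_equiv_Eq: "tr_equiv (Eq s t) G"
  and tr_equiv_Lt: "tr_equiv (Lt s t) G"
  by (simp only: tr.simps, rule ND_IffI, rule hyp0, rule hyp0)+

lemma tr_equiv_Conj: "tr_equiv A G \<Longrightarrow> tr_equiv B G \<Longrightarrow> tr_equiv (Conj A B) G"
  apply (simp only: tr.simps)
  apply (rule ND_IffI)
   apply (rule ND.ImpI)
   apply (rule ND.ImpE[OF tr_equivD[where A=A]], assumption, rule ND.ConjE1, rule hyp1)
   apply (rule ND.ImpI)
   apply (rule ND.ImpE[OF tr_equivD[where A=B]], assumption, rule ND.ConjE2, rule hyp2)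
   apply (rule ND.ImpI)
   apply (rule ND.ImpE[OF hyp2], rule ND.ConjI, rule hyp1, rule hyp0)
  apply (rule ND.ConjI)
   apply (rule tr_equivI, assumption, rule ND.ImpI, rule ND.ImpE[OF hyp1], rule ND.ImpI,
      rule ND.ImpE[OF hyp1], rule ND.ConjE1, rule hyp0)
  apply (rule tr_equivI, assumption, rule ND.ImpI, rule ND.ImpE[OF hyp1], rule ND.ImpI,
      rule ND.ImpE[OF hyp1], rule ND.ConjE2, rule hyp0)
  done

lemma tr_equiv_Disj: "tr_equiv A G \<Longrightarrow> tr_equiv B G \<Longrightarrow> tr_equiv (Disj A B) G"
  apply (simp only: tr.simps)
  apply (rule ND_IffI)
   apply (rule ND.ImpI)
   apply (rule ND.ImpE[OF hyp1], rule ND.ConjI)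
    apply (rule ND.ImpI, rule ND.ImpE[OF tr_equivD[where A=A]], assumption, rule hyp0)
    apply (rule ND.ImpI, rule ND.ImpE[OF hyp2], rule ND.DisjI1, rule hyp0)
   apply (rule ND.ImpI, rule ND.ImpE[OF tr_equivD[where A=B]], assumption, rule hyp0)
   apply (rule ND.ImpI, rule ND.ImpE[OF hyp2], rule ND.DisjI2, rule hyp0)
  apply (rule ND.ImpI, rule ND.ImpE[OF hyp1], rule ND.ImpI, rule ND.DisjE[OF hyp0])
   apply (rule ND.ImpE[OF ND.ConjE1[OF hyp2]], rule tr_equivI, assumption,
      rule ND.ImpI, rule ND.ImpE[OF hyp0 hyp1])
  apply (rule ND.ImpE[OF ND.ConjE2[OF hyp2]], rule tr_equivI, assumption,
      rule ND.ImpI, rule ND.ImpE[OF hyp0 hyp1])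
  done

text \<open>Decidability of the antecedent is what makes \<open>(A \<rightarrow> B)\<^sup>G\<close> collapse to the
  \<open>G\<close>-double negation of \<open>A \<rightarrow> B\<close>; it is where \<open>\<Delta>\<^sub>0\<close> enters.\<close>

lemma tr_equiv_Imp: "HA_decidable A \<Longrightarrow> tr_equiv A G \<Longrightarrow> tr_equiv B G \<Longrightarrow> tr_equiv (Imp A B) G"
  apply (simp only: tr.simps)
  apply (rule ND_IffI)
   apply (rule ND.ImpI)
   apply (rule ND.DisjE[OF ND_Nil_weaken], assumption)
    apply (rule ND.ImpE[OF tr_equivD[where A=B]], assumption)
     apply (rule ND.ImpE[OF hyp2], rule tr_equivI, assumption, rule ND.ImpI, rule ND.ImpE[OF hyp0 hyp1])
    apply (rule ND.ImpI, rule ND.ImpE[OF hyp2], rule ND.ImpI, rule hyp1)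
   apply (rule ND.ImpE[OF hyp1], rule ND.ImpI, rule ND.BotE, rule ND.ImpE[OF hyp1 hyp0])
  apply (rule ND.ImpI, rule tr_equivI, assumption)
  apply (rule ND.ImpI, rule ND.ImpE[OF hyp2], rule ND.ImpI)
  apply (rule ND.ImpE[OF tr_equivD[where A=A]], assumption, rule hyp2)
  apply (rule ND.ImpI, rule ND.ImpE[OF hyp2], rule ND.ImpE[OF hyp1 hyp0])
  done

lemma tr_equiv_Ex: "(\<And>G. tr_equiv A G) \<Longrightarrow> tr_equiv (Ex A) G"
  apply (simp only: tr.simps)
  apply (rule ND_IffI)
   apply (rule ND.ImpI)
   apply (rule ND.ImpE[OF hyp1], rule ND.AllI, rule ND.ImpI)
   apply (rule ND.ImpE[OF tr_equivD[where G="lift G"]], assumption, rule hyp0)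
   apply (rule ND.ImpI)
   apply (rule ND.ImpE[where A="lift (Ex A)"])
    apply (rule ND.Hyp, simp add: lift_Imp)
   apply (rule ND_ExI_lift, rule hyp0)
  apply (rule ND.ImpI)
  apply (rule ND.ImpE[OF hyp1], rule ND.ImpI)
  apply (rule ND.ExE[OF hyp0])
  apply (rule ND.ImpE[OF ND_AllE_lift[where A="Imp (tr A (lift G)) (lift G)"]])
   apply (rule ND.Hyp, simp)
  apply (rule tr_equivI, assumption, rule ND.ImpI, rule ND.ImpE[OF hyp0 hyp1])
  done

lemma tr_equiv_BAll: "Delta0 B \<Longrightarrow> (\<And>G. tr_equiv B G) \<Longrightarrow> tr_equiv (BAll t B) G"
  apply (unfold BAll_def)
  apply (subst tr.simps)+
  apply (rule ND_IffI)
   apply (rule ND.DisjE[OF BAll_or_BEx_Neg[of B _ t]], assumption, rule Delta0_decidable, assumption)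
    apply (rule ND.ImpI, rule ND.ImpE[OF hyp0], rule ND.Hyp, simp add: BAll_def)
   apply (rule ND.ImpI)
   apply (rule ND.ExE[where A="Conj (Lt (Var 0) (trm_lift t)) (Neg B)"])
    apply (rule ND.Hyp, simp add: BEx_def)
   apply (rule ND.ImpE[OF tr_equivD[where A=B and G="lift G"]], assumption)
    apply (rule ND.ImpE[OF ND_AllE_lift[where A="Imp (tr (Lt (Var 0) (trm_lift t)) (lift G)) (tr B (lift G))"]])
     apply (rule ND.Hyp, simp)
    apply (simp only: tr.simps)
    apply (rule ND.ImpI, rule ND.ImpE[OF hyp0], rule ND.ConjE1, rule hyp1)
   apply (rule ND.ImpI, rule ND.BotE, rule ND.ImpE[OF ND.ConjE2[OF hyp1] hyp0])
  apply (rule ND.AllI, simp only: list.map tr.simps, rule ND.ImpI)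
  apply (rule tr_equivI, assumption)
  apply (rule ND.ImpI, rule ND.ImpE[OF hyp1], rule ND.ImpI)
  apply (rule ND.ImpE[where A="Imp (lift (All (Imp (Lt (Var 0) (trm_lift t)) B))) (lift G)"])
   apply (rule ND.Hyp, simp add: lift_Imp)
  apply (rule ND.ImpI, rule ND.ImpE[OF hyp2])
  apply (rule ND.ImpE[OF ND_AllE_lift[OF hyp0] hyp1])
  done

lemma Delta0_tr_equiv: "Delta0 A \<Longrightarrow> tr_equiv A G"
proof (induction arbitrary: G rule: Delta0.induct)
  case (6 A B)
  then show ?case by (intro tr_equiv_Imp Delta0_decidable)
next
  case (8 B t)
  then show ?case unfolding BEx_def by (intro tr_equiv_Ex tr_equiv_Conj tr_equiv_Lt)
qed (rule tr_equiv_Bot tr_equiv_Eq tr_equiv_Lt tr_equiv_Conj tr_equiv_Disj tr_equiv_BAll; assumption)+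

lemma Sigma1_tr_equiv: "Sigma1 A \<Longrightarrow> tr_equiv A G"
  by (induction arbitrary: G rule: Sigma1.induct) (rule Delta0_tr_equiv tr_equiv_Ex; assumption)+

lemma tr_basic_ax: "B \<in> basic_ax \<Longrightarrow> HA \<Gamma> (tr B G)"
proof (rule tr_equivI)
  assume "B \<in> basic_ax"
  then show "tr_equiv B G" by (auto simp: basic_ax_def intro!: Delta0_tr_equiv Delta0.intros)
  have "HA (Imp B G # \<Gamma>) B" by (rule ND.Ax) (simp add: axioms0_def \<open>B \<in> basic_ax\<close>)
  then show "HA \<Gamma> (NN G B)" by (intro ND.ImpI, rule ND.ImpE[OF hyp0])
qed

lemma Iff_trans: "HA [] (Iff X Y) \<Longrightarrow> HA [] (Iff Y Z) \<Longrightarrow> HA [] (Iff X Z)"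
  by (rule ND_IffI; erule ND_IffD1[OF ND_Nil_weaken] ND_IffD2[OF ND_Nil_weaken];
      erule ND_IffD1[OF ND_Nil_weaken] ND_IffD2[OF ND_Nil_weaken]; rule hyp0)

lemma Ex_Iff_cong: "HA [] (Iff X Y) \<Longrightarrow> HA [] (Iff (Ex X) (Ex Y))"
  by (rule ND_IffI; rule ND.ExE[OF hyp0], rule ND_ExI_lift,
      erule ND_IffD1[OF ND_Nil_weaken] ND_IffD2[OF ND_Nil_weaken], rule hyp0)

lemma Ex_Disj_lift_right: "HA [] (Iff (Ex (Disj A (lift B))) (Disj (Ex A) B))"
  apply (rule ND_IffI)
   apply (rule ND.ExE[OF hyp0], simp only: lift_Disj)
   apply (rule ND.DisjE[OF hyp0])
    apply (rule ND.DisjI1, rule ND_ExI_lift, rule hyp0)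
   apply (rule ND.DisjI2, rule hyp0)
  apply (rule ND.DisjE[OF hyp0])
   apply (rule ND.ExE[OF hyp0], rule ND_ExI_lift, rule ND.DisjI1, rule hyp0)
  apply (rule ND.ExI[where t=Zero], simp, rule ND.DisjI2, rule hyp0)
  done

lemma Ex_Disj_lift_left: "HA [] (Iff (Ex (Disj (lift A) B)) (Disj A (Ex B)))"
  apply (rule ND_IffI)
   apply (rule ND.ExE[OF hyp0], simp only: lift_Disj)
   apply (rule ND.DisjE[OF hyp0])
    apply (rule ND.DisjI1, rule hyp0)
   apply (rule ND.DisjI2, rule ND_ExI_lift, rule hyp0)
  apply (rule ND.DisjE[OF hyp0])
   apply (rule ND.ExI[where t=Zero], simp, rule ND.DisjI1, rule hyp0)
  apply (rule ND.ExE[OF hyp0], rule ND_ExI_lift, rule ND.DisjI2, rule hyp0)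
  done

lemma Disj_Delta0_Sigma1_prenex:
  "Sigma1 E \<Longrightarrow> Delta0 D \<Longrightarrow> \<exists>X. Sigma1 X \<and> HA [] (Iff X (Disj D E))"
proof (induction arbitrary: D rule: Sigma1.induct)
  case (1 E)
  have "HA [] (Iff (Disj D E) (Disj D E))" by (rule ND_IffI; rule hyp0)
  with 1 show ?case by (intro exI[of _ "Disj D E"] conjI Sigma1.intros Delta0.intros)
next
  case (2 E)
  then obtain X where "Sigma1 X" "HA [] (Iff X (Disj (lift D) E))"
    by (metis Delta0_fm_subst lift_def)
  then show ?case
    by (intro exI[of _ "Ex X"] conjI Sigma1.intros(2) Iff_trans[OF Ex_Iff_cong Ex_Disj_lift_left])
qed

lemma Disj_Sigma1_prenex: "Sigma1 D \<Longrightarrow> Sigma1 E \<Longrightarrow> \<exists>X. Sigma1 X \<and> HA [] (Iff X (Disj D E))"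
proof (induction arbitrary: E rule: Sigma1.induct)
  case (1 D)
  then show ?case using Disj_Delta0_Sigma1_prenex by blast
next
  case (2 D)
  then obtain X where "Sigma1 X" "HA [] (Iff X (Disj D (lift E)))" using Sigma1_lift by blast
  then show ?case
    by (intro exI[of _ "Ex X"] conjI Sigma1.intros(2) Iff_trans[OF Ex_Iff_cong Ex_Disj_lift_right])
qed

text \<open>\<open>((D \<rightarrow> E) \<rightarrow> E)\<^sup>G\<close> is equivalent to \<open>(X \<rightarrow> G) \<rightarrow> G\<close> with \<open>X\<close> a \<open>\<Sigma>\<^sub>1\<close> form of
  \<open>D \<or> E\<close>; this is why the induction schema of \<open>HA\<^sub>0\<close> is closed under the translation.\<close>

lemma tr_ind_formula_equiv:
  assumes eD: "tr_equiv D G" and eE: "tr_equiv E G" and X: "HA [] (Iff X (Disj D E))"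
  shows "HA [] (Iff (tr (Imp (Imp D E) E) G) (NN G X))"
  apply (simp only: tr.simps)
  apply (rule ND_IffI)
   apply (rule ND.ImpI)
   apply (rule ND.ImpE[OF tr_equivD[OF eE]])
    apply (rule ND.ImpE[OF hyp1])
    apply (rule ND.ImpI, rule tr_equivI[OF eE], rule ND.ImpI)
    apply (rule ND.ImpE[OF tr_equivD[OF eD hyp1]])
    apply (rule ND.ImpI, rule ND.ImpE[OF hyp3], rule ND_IffD2[OF ND_Nil_weaken[OF X]], rule ND.DisjI1, rule hyp0)
   apply (rule ND.ImpI, rule ND.ImpE[OF hyp1], rule ND_IffD2[OF ND_Nil_weaken[OF X]], rule ND.DisjI2, rule hyp0)
  apply (rule ND.ImpI, rule tr_equivI[OF eE], rule ND.ImpI)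
  apply (rule ND.ImpE[OF hyp2], rule ND.ImpI)
  apply (rule ND.DisjE[OF ND_IffD1[OF ND_Nil_weaken[OF X] hyp0]])
   apply (rule ND.ImpE[OF tr_equivD[OF eE]])
    apply (rule ND.ImpE[OF hyp3], rule tr_equivI[OF eD], rule ND.ImpI, rule ND.ImpE[OF hyp0 hyp1])
   apply (rule hyp2)
  apply (rule ND.ImpE[OF hyp2 hyp0])
  done

lemma HA_tr_ind_ax:
  assumes "Sigma1 D" "Sigma1 E" "Sigma1 G"
  shows "HA \<Delta> (ind_ax (tr (Imp (Imp D E) E) G))"
proof -
  obtain X where X: "Sigma1 X" "HA [] (Iff X (Disj D E))"
    using Disj_Sigma1_prenex[OF assms(1,2)] by blast
  have "HA \<Delta> (ind_ax (Imp (Imp X G) G))"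
    using X(1) \<open>Sigma1 G\<close> by (intro ND.Ax) (auto simp: axioms0_def)
  then show ?thesis
    by (rule ind_ax_transfer[OF tr_ind_formula_equiv[OF Sigma1_tr_equiv[OF assms(1)]
          Sigma1_tr_equiv[OF assms(2)] X(2)]])
qed

lemma tr_axioms0: "B \<in> axioms0 \<Longrightarrow> Sigma1 G \<Longrightarrow> HA \<Delta> (tr B G)"
  using tr_basic_ax HA_tr_ind_ax Sigma1_lift by (auto simp: axioms0_def tr_ind_ax)

lemma Sigma1_conservative: "Sigma1 A \<Longrightarrow> PA0_proves A \<Longrightarrow> HA0_proves A"
proof -
  assume "Sigma1 A" "PA0_proves A"
  then have "HA [] (tr A A)"
    using tr_sound[of True axioms0 "[]" A, OF _ tr_axioms0] by (simp add: PA0_proves_def)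
  then have "HA [] (NN A A)" by (rule tr_equivD[OF Sigma1_tr_equiv[OF \<open>Sigma1 A\<close>]])
  then show "HA0_proves A" unfolding HA0_proves_def by (rule ND.ImpE) (rule ND.ImpI, rule hyp0)
qed

lemma Pi2_conservative: "Pi2 A \<Longrightarrow> PA0_proves A \<Longrightarrow> HA0_proves A"
proof (induction rule: Pi2.induct)
  case (1 A)
  then show ?case by (rule Sigma1_conservative)
next
  case (2 A)
  then have "HA0_proves A"
    using ND_axioms0_All_open[of True "[]" A] by (simp add: PA0_proves_def)
  then show ?case using ND.AllI[of False axioms0 "[]" A] by (simp add: HA0_proves_def)
qed

text \<open>The \<open>\<Pi>\<^sub>2\<close> part holds for formulas with free variables as well.\<close>

theorem lemma3p4:
  shows "(\<forall>A. Sigma1 A \<longrightarrow> PA0_proves A \<longrightarrow> HA0_proves A) \<and>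
         (\<forall>A. Pi2 A \<longrightarrow> sentence A \<longrightarrow> PA0_proves A \<longrightarrow> HA0_proves A)"
  using Sigma1_conservative Pi2_conservative by blast

end
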